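(* Consider the last week of the FRS model with performance vector $W=[1,2,0,1]$ before that week and weights $v_1=v_2=1$, $v_3=v_4\le 1$. Then for each $i\in\{1,2,3,4\}$, the probability $E_i(\pi)$ that $a_i$ wins the championship is the same for all action vectors $\pi=(\pi_1,\pi_2,\pi_3,\pi_4)\in[0,1]^4$ with $\pi_1=\pi_2$ and $\pi_3=\pi_4$.
   Context: FRS model: four teams $a_1,\dots,a_4$ with weights $v_1\ge v_2\ge v_3\ge v_4>0$; $p_{ij}=v_i/(v_i+v_j)$. In the last regular-season week the games $a_1$ vs $a_2$ and $a_3$ vs $a_4$ are played simultaneously. Team $a_i$ tries to win with probability $\pi_i$ and loses intentionally with probability $1-\pi_i$, independently. If both teams in a game try, $a_i$ beats $a_j$ with probability $p_{ij}$; if exactly one tries, it wins with probability 1; if both lose intentionally, a fair coin decides. $W$ gives wins before the last week. After the season teams are seeded by total wins (descending), ties broken by assigning the tied seed positions uniformly at random; knockout: seed 1 vs seed 4, seed 2 vs seed 3, winners meet in the final, tournament games won by $a_i$ over $a_j$ with probability $p_{ij}$. *)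

theory Defs
  imports Complex_Main
begin

definition frs_p :: "(nat \<Rightarrow> real) \<Rightarrow> nat \<Rightarrow> nat \<Rightarrow> real" where
  "frs_p v i j = v i / (v i + v j)"

text \<open>Probability that team i beats team j in a last-week game when i tries with
probability pi_i and j tries with probability pi_j (independently).\<close>
definition last_week_win :: "(nat \<Rightarrow> real) \<Rightarrow> (nat \<Rightarrow> real) \<Rightarrow> nat \<Rightarrow> nat \<Rightarrow> real" where
  "last_week_win v \<pi> i j =
     \<pi> i * \<pi> j * frs_p v i j + \<pi> i * (1 - \<pi> j) * 1 + (1 - \<pi> i) * \<pi> j * 0
     + (1 - \<pi> i) * (1 - \<pi> j) * (1/2)"

text \<open>Seedings: lists s with s!0 = seed 1, ..., s!3 = seed 4, a permutation of the teams.\<close>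
definition seedings :: "nat list set" where
  "seedings = {s. distinct s \<and> set s = {1,2,3,4}}"

text \<open>Seedings consistent with total wins w (descending); ties are broken uniformly at
random, i.e. the seeding is uniform over the consistent ones.\<close>
definition valid_seedings :: "(nat \<Rightarrow> nat) \<Rightarrow> nat list set" where
  "valid_seedings w = {s \<in> seedings. sorted_wrt (\<ge>) (map w s)}"

text \<open>Probability that team i wins the knockout tournament for a fixed seeding s:
seed 1 vs seed 4, seed 2 vs seed 3, winners meet in the final.\<close>
definition knockout_win :: "(nat \<Rightarrow> real) \<Rightarrow> nat list \<Rightarrow> nat \<Rightarrow> real" where
  "knockout_win v s i =
     (\<Sum>(x, y) \<in> {(s!0, s!3), (s!3, s!0)} \<times> {(s!1, s!2), (s!2, s!1)}.
        frs_p v (fst x) (snd x) * frs_p v (fst y) (snd y) *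
        (if i = fst x then frs_p v (fst x) (fst y)
         else if i = fst y then frs_p v (fst y) (fst x) else 0))"

definition champ_prob_given :: "(nat \<Rightarrow> real) \<Rightarrow> (nat \<Rightarrow> nat) \<Rightarrow> nat \<Rightarrow> real" where
  "champ_prob_given v w i =
     (\<Sum>s \<in> valid_seedings w. knockout_win v s i) / real (card (valid_seedings w))"

text \<open>E_i(pi): probability that team i wins the championship, where W gives wins before
the last week and games a1 vs a2, a3 vs a4 are played in the last week.
b1 = True means a1 beats a2; b2 = True means a3 beats a4.\<close>
definition champ_prob :: "(nat \<Rightarrow> real) \<Rightarrow> (nat \<Rightarrow> nat) \<Rightarrow> (nat \<Rightarrow> real) \<Rightarrow> nat \<Rightarrow> real" where
  "champ_prob v W \<pi> i =
     (\<Sum>b1 \<in> (UNIV :: bool set). \<Sum>b2 \<in> (UNIV :: bool set).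
        (if b1 then last_week_win v \<pi> 1 2 else last_week_win v \<pi> 2 1) *
        (if b2 then last_week_win v \<pi> 3 4 else last_week_win v \<pi> 4 3) *
        champ_prob_given v
          (\<lambda>k. W k + (if (k = 1 \<and> b1) \<or> (k = 2 \<and> \<not> b1) \<or> (k = 3 \<and> b2) \<or> (k = 4 \<and> \<not> b2)
                       then 1 else 0)) i)"

end

theory Submission
  imports Defs
begin

text \<open>In each last-week game the two opponents have equal weights and play the same mixed
strategy, so by symmetry either team wins with probability 1/2, whatever that strategy is.
The outcome of the last week, hence every championship probability, therefore does not
depend on \<open>\<pi>\<close>.\<close>

lemma frs_p_equal_weights:
  assumes "v i = v j" "v j \<noteq> 0"
  shows "frs_p v i j = 1/2"
  using assms by (simp add: frs_p_def)

lemma last_week_win_symmetric: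
  assumes "v i = v j" "v j \<noteq> 0" "\<pi> i = \<pi> j"
  shows "last_week_win v \<pi> i j = 1/2"
  using assms frs_p_equal_weights[OF assms(1,2)]
  by (simp add: last_week_win_def algebra_simps)

lemma champ_prob_cong_last_week:
  assumes "last_week_win v \<pi> 1 2 = last_week_win v \<pi>' 1 2"
    and "last_week_win v \<pi> 2 1 = last_week_win v \<pi>' 2 1"
    and "last_week_win v \<pi> 3 4 = last_week_win v \<pi>' 3 4"
    and "last_week_win v \<pi> 4 3 = last_week_win v \<pi>' 4 3"
  shows "champ_prob v W \<pi> i = champ_prob v W \<pi>' i"
  unfolding champ_prob_def by (simp only: assms)

theorem corollary2:
  fixes v :: "nat \<Rightarrow> real" and W :: "nat \<Rightarrow> nat" and \<pi> \<pi>' :: "nat \<Rightarrow> real"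
  assumes "W 1 = 1" "W 2 = 2" "W 3 = 0" "W 4 = 1"
    and "v 1 = 1" "v 2 = 1" "v 3 = v 4" "v 4 \<le> 1" "v 4 > 0"
    and "\<forall>k\<in>{1,2,3,4}. 0 \<le> \<pi> k \<and> \<pi> k \<le> 1" "\<pi> 1 = \<pi> 2" "\<pi> 3 = \<pi> 4"
    and "\<forall>k\<in>{1,2,3,4}. 0 \<le> \<pi>' k \<and> \<pi>' k \<le> 1" "\<pi>' 1 = \<pi>' 2" "\<pi>' 3 = \<pi>' 4"
    and "i \<in> {1,2,3,4}"
  shows "champ_prob v W \<pi> i = champ_prob v W \<pi>' i"
proof -
  have fair_games:
    "last_week_win v p 1 2 = 1/2" "last_week_win v p 2 1 = 1/2"
    "last_week_win v p 3 4 = 1/2" "last_week_win v p 4 3 = 1/2"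
    if "p 1 = p 2" "p 3 = p 4" for p
    using that \<open>v 1 = 1\<close> \<open>v 2 = 1\<close> \<open>v 3 = v 4\<close> \<open>v 4 > 0\<close>
    by (simp_all add: last_week_win_symmetric)
  show ?thesis
    by (rule champ_prob_cong_last_week)
      (simp_all only: fair_games[OF \<open>\<pi> 1 = \<pi> 2\<close> \<open>\<pi> 3 = \<pi> 4\<close>]
        fair_games[OF \<open>\<pi>' 1 = \<pi>' 2\<close> \<open>\<pi>' 3 = \<pi>' 4\<close>])
qed

end
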